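(* Let $N\geq1$ and $0\leq m\leq2$. Let $a\in C(\mathbb{R}^N)\cap L^\infty(\mathbb{R}^N)$ with $a^+=\max\{0,a\}\not\equiv0$ and $\limsup_{|x|\to\infty}a(x)<0$. Let $J\in L^1(\mathbb{R}^N)$ be nonnegative, radially symmetric, with $\int_{\mathbb{R}^N}J=1$, and for $\varepsilon>0$ let $J_\varepsilon(z)=\varepsilon^{-N}J(z/\varepsilon)$. Suppose that there is $\varepsilon_0>0$ such that, for every $0<\varepsilon<\varepsilon_0$, there is a nonnegative $u_\varepsilon\in L^\infty(\mathbb{R}^N)$ satisfying $$\frac{1}{\varepsilon^m}\big(J_\varepsilon\ast u_\varepsilon-u_\varepsilon\big)+u_\varepsilon(a-u_\varepsilon)=0\quad\text{a.e. in }\mathbb{R}^N.$$ Then there exists $\varepsilon_{m,a^+}>0$ such that, for all $0<\varepsilon<\min\{\varepsilon_0,\varepsilon_{m,a^+}\}$, $u_\varepsilon$ has a representative in $C_0(\mathbb{R}^N)$ (i.e. $u_\varepsilon\in C_0(\mathbb{R}^N)$), and either $u_\varepsilon>0$ in $\mathbb{R}^N$ or $u_\varepsilon\equiv0$ in $\mathbb{R}^N$.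
   Context: $(J_\varepsilon\ast u)(x)=\int_{\mathbb{R}^N}J_\varepsilon(x-y)u(y)\,\mathrm{d}y$. $C_0(\mathbb{R}^N)$ denotes continuous functions vanishing at infinity. *)

theory Defs
  imports "HOL-Analysis.Analysis"
begin

definition kernel_scale :: "real \<Rightarrow> ('a::euclidean_space \<Rightarrow> real) \<Rightarrow> 'a \<Rightarrow> real" where
  "kernel_scale eps J z = J (z /\<^sub>R eps) / eps ^ DIM('a)"

definition conv :: "('a::euclidean_space \<Rightarrow> real) \<Rightarrow> ('a \<Rightarrow> real) \<Rightarrow> 'a \<Rightarrow> real" where
  "conv J u x = (LINT y|lborel. J (x - y) * u y)"

definition Linf :: "('a::euclidean_space \<Rightarrow> real) \<Rightarrow> bool" where
  "Linf u \<longleftrightarrow> u \<in> borel_measurable lborel \<and> (\<exists>C. AE x in lborel. \<bar>u x\<bar> \<le> C)"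

definition C0 :: "('a::euclidean_space \<Rightarrow> real) \<Rightarrow> bool" where
  "C0 v \<longleftrightarrow> continuous_on UNIV v \<and> (v \<longlongrightarrow> 0) at_infinity"

end

theory Submission
  imports Defs
begin

text \<open>Write \<open>c = \<epsilon>\<^sup>-\<^sup>m\<close>, \<open>K = J\<^sub>\<epsilon>\<close> and \<open>w = K * u\<close>. Since translation is continuous in
  \<open>L\<^sup>1\<close> and \<open>u\<close> is bounded, \<open>w\<close> is continuous, and the equation reads
  \<open>u\<^sup>2 + (c - a) u = c w\<close> almost everywhere. The zero set of \<open>w\<close> is closed, and it is open:
  if \<open>w(x) = 0\<close> then \<open>u = 0\<close> a.e. where \<open>K(x - \<cdot>) > 0\<close>, hence \<open>w = 0\<close> there by the
  equation, i.e. \<open>(K * K * u)(x) = 0\<close>; as \<open>K * K > 0\<close> near the origin, \<open>u\<close> and then \<open>w\<close>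
  vanish near \<open>x\<close>. So either \<open>u = 0\<close> a.e., or \<open>w > 0\<close> everywhere and \<open>u\<close> agrees a.e. with
  the continuous positive root \<open>v\<close> of \<open>v\<^sup>2 + (c - a) v = c w\<close>. Where \<open>a \<le> -\<eta>\<close> this root
  satisfies \<open>v \<le> c/(c + \<eta>) K * v\<close>, and iterating this contraction against the kernel of
  mass one forces \<open>v \<rightarrow> 0\<close> at infinity. No smallness of \<open>\<epsilon>\<close> is needed, and neither are the
  range of \<open>m\<close>, the boundedness of \<open>a\<close>, or \<open>a\<^sup>+ \<noteq> 0\<close>.\<close>

lemma nn_integral_lborel_affine:
  fixes f :: "'a::euclidean_space \<Rightarrow> ennreal" and c :: real
  assumes [measurable]: "f \<in> borel_measurable borel" and c: "c \<noteq> 0"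
  shows "(\<integral>\<^sup>+x. f x \<partial>lborel) = \<bar>c\<bar> ^ DIM('a) * (\<integral>\<^sup>+x. f (t + c *\<^sub>R x) \<partial>lborel)"
  by (subst lborel_affine[OF c, of t])
     (simp add: nn_integral_density nn_integral_distr nn_integral_cmult)

lemma lborel_integrable_affine:
  fixes f :: "'a::euclidean_space \<Rightarrow> 'b::{banach, second_countable_topology}"
  assumes f: "integrable lborel f" and c: "c \<noteq> 0"
  shows "integrable lborel (\<lambda>x. f (t + c *\<^sub>R x))"
  using f f[THEN borel_measurable_integrable] c unfolding integrable_iff_bounded
  by (subst (asm) nn_integral_lborel_affine[where c=c and t=t]) (auto simp: ennreal_mult_less_top)

lemma lborel_integrable_affine_iff:
  fixes f :: "'a::euclidean_space \<Rightarrow> 'b::{banach, second_countable_topology}"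
  assumes c: "c \<noteq> 0"
  shows "integrable lborel (\<lambda>x. f (t + c *\<^sub>R x)) \<longleftrightarrow> integrable lborel f"
  using lborel_integrable_affine[of f c t]
    lborel_integrable_affine[of "\<lambda>x. f (t + c *\<^sub>R x)" "1/c" "- t /\<^sub>R c"] c
  by (auto simp: algebra_simps)

lemma lborel_integral_affine:
  fixes f :: "'a::euclidean_space \<Rightarrow> 'b::{banach, second_countable_topology}"
  assumes c: "c \<noteq> 0"
  shows "(\<integral>x. f x \<partial>lborel) = (\<bar>c\<bar> ^ DIM('a)) *\<^sub>R (\<integral>x. f (t + c *\<^sub>R x) \<partial>lborel)"
proof cases
  assume f[measurable]: "integrable lborel f"
  then show ?thesis
    using c f[THEN borel_measurable_integrable] lborel_integrable_affine[OF f c, of t]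
    by (subst lborel_affine[OF c, of t]) (simp add: integral_density integral_distr)
next
  assume "\<not> integrable lborel f"
  with c show ?thesis
    by (simp add: lborel_integrable_affine_iff not_integrable_integral_eq)
qed

lemma lborel_integrable_translate_iff:
  fixes f :: "'a::euclidean_space \<Rightarrow> 'b::{banach, second_countable_topology}"
  shows "integrable lborel (\<lambda>x. f (x + h)) \<longleftrightarrow> integrable lborel f"
  using lborel_integrable_affine_iff[of 1 f h] by (simp add: add.commute)

lemma lborel_integral_translate:
  fixes f :: "'a::euclidean_space \<Rightarrow> 'b::{banach, second_countable_topology}"
  shows "(\<integral>x. f (x + h) \<partial>lborel) = (\<integral>x. f x \<partial>lborel)"
  using lborel_integral_affine[of 1 f h] by (simp add: add.commute)

lemma lborel_integrable_reflect_iff: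
  fixes f :: "'a::euclidean_space \<Rightarrow> 'b::{banach, second_countable_topology}"
  shows "integrable lborel (\<lambda>y. f (x - y)) \<longleftrightarrow> integrable lborel f"
  using lborel_integrable_affine_iff[of "-1" f x] by simp

lemma lborel_integral_reflect:
  fixes f :: "'a::euclidean_space \<Rightarrow> 'b::{banach, second_countable_topology}"
  shows "(\<integral>y. f (x - y) \<partial>lborel) = (\<integral>y. f y \<partial>lborel)"
  using lborel_integral_affine[of "-1" f x] by simp

lemma nn_integral_lborel_translate:
  fixes f :: "'a::euclidean_space \<Rightarrow> ennreal"
  assumes "f \<in> borel_measurable borel"
  shows "(\<integral>\<^sup>+x. f (x + h) \<partial>lborel) = (\<integral>\<^sup>+x. f x \<partial>lborel)"
  using nn_integral_lborel_affine[OF assms, of 1 h] by (simp add: add.commute)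

lemma continuous_AE_le_imp_le:
  fixes f g :: "'a::euclidean_space \<Rightarrow> real"
  assumes "continuous_on UNIV f" "continuous_on UNIV g" "open S"
    and "AE x in lborel. x \<in> S \<longrightarrow> f x \<le> g x"
  shows "\<forall>x\<in>S. f x \<le> g x"
proof -
  let ?B = "{x\<in>S. g x < f x}"
  have "open ?B"
    using open_Int[OF assms(3) open_Collect_less[OF assms(2,1)]] by (simp add: Collect_conj_eq)
  then have "?B \<in> null_sets lborel"
    using assms(4) by (subst (asm) AE_iff_measurable[of ?B]) auto
  then have "negligible ?B"
    by (simp add: negligible_iff_null_sets null_sets_completionI)
  then have "?B = {}"
    using open_not_negligible \<open>open ?B\<close> by blast
  then show ?thesis by force
qed

lemma tendsto_emeasure_diff_cball:
  fixes A :: "'a::euclidean_space set"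
  assumes [measurable]: "A \<in> sets borel" and A_fin: "emeasure lborel A < \<infinity>"
  shows "(\<lambda>n. emeasure lborel (A - cball 0 (real n))) \<longlonglongrightarrow> 0"
proof -
  have "emeasure lborel (A - cball 0 (real n)) \<noteq> \<infinity>" for n
    using order.strict_trans1[OF emeasure_mono A_fin, of "A - cball 0 (real n)"] by auto
  then have lim: "(\<lambda>n. emeasure lborel (A - cball 0 (real n)))
      \<longlonglongrightarrow> emeasure lborel (\<Inter>n. A - cball 0 (real n))"
    by (intro Lim_emeasure_decseq) (auto simp: decseq_def)
  have empty: "(\<Inter>n. A - cball 0 (real n)) = {}"
  proof (intro equals0I)
    fix x assume x: "x \<in> (\<Inter>n. A - cball 0 (real n))"
    obtain n where "norm x \<le> real n"
      using real_arch_simple by blast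
    moreover have "x \<in> A - cball 0 (real n)"
      using x by (rule INT_D) simp
    ultimately show False
      by simp
  qed
  from lim show ?thesis
    unfolding empty emeasure_empty .
qed

lemma lborel_compact_open_approx:
  fixes A :: "'a::euclidean_space set" and e :: real
  assumes A[measurable]: "A \<in> sets borel" and A_fin: "emeasure lborel A < \<infinity>" and e: "e > 0"
  obtains T U where "compact T" "T \<subseteq> A" "open U" "A \<subseteq> U" "emeasure lborel (U - T) < e"
proof -
  have "eventually (\<lambda>n. emeasure lborel (A - cball 0 (real n)) < ennreal (e/3)) sequentially"
    using order_tendstoD(2)[OF tendsto_emeasure_diff_cball[OF A A_fin], of "ennreal (e/3)"] e by simp
  then obtain n where n: "emeasure lborel (A - cball 0 (real n)) < ennreal (e/3)"
    by (auto simp: eventually_sequentially)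
  define B where "B = A \<inter> cball 0 (real n)"
  have "B \<in> sets lebesgue"
    by (simp add: B_def)
  then obtain T where T: "closed T" "T \<subseteq> B" "emeasure lebesgue (B - T) < ennreal (e/3)"
    using sets_lebesgue_inner_closed[of B "e/3"] e by (metis divide_pos_pos zero_less_numeral)
  have [measurable]: "T \<in> sets borel"
    using T(1) by simp
  have BT: "emeasure lborel (B - T) < ennreal (e/3)"
    using T(3) by (simp add: B_def)
  obtain U where U: "open U" "A \<subseteq> U" "emeasure lborel (U - A) < ennreal (e/3)"
    using outer_regular_lborel[OF A, of "e/3"] e by auto
  have [measurable]: "U \<in> sets borel"
    using U(1) by simp
  have "T \<subseteq> cball 0 (real n)"
    using T(2) by (simp add: B_def)
  then have "compact T"
    using T(1) bounded_cball bounded_subset compact_eq_bounded_closed by blast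
  moreover have "T \<subseteq> A"
    using T(2) by (simp add: B_def)
  moreover have "emeasure lborel (U - T) < e"
  proof -
    have "emeasure lborel (U - T) \<le> emeasure lborel ((U - A) \<union> (A - cball 0 (real n)) \<union> (B - T))"
      by (intro emeasure_mono) (auto simp: B_def)
    also have "\<dots> \<le> emeasure lborel (U - A) + emeasure lborel (A - cball 0 (real n)) + emeasure lborel (B - T)"
      by (intro order.trans[OF emeasure_subadditive] add_right_mono emeasure_subadditive)
         (simp_all add: B_def)
    also have "\<dots> < ennreal (e/3) + ennreal (e/3) + ennreal (e/3)"
      using U(3) n BT by (intro add_strict_mono)
    also have "\<dots> = ennreal e"
      using e by (simp flip: ennreal_plus)
    finally show ?thesis .
  qed
  ultimately show ?thesis
    using that U(1,2) by blast
qed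

definition L1_translation_continuous :: "('a::euclidean_space \<Rightarrow> 'b::{banach, second_countable_topology}) \<Rightarrow> bool" where
  "L1_translation_continuous f \<longleftrightarrow>
     (\<forall>e>0. \<exists>d>0. \<forall>h. norm h < d \<longrightarrow> (LINT x|lborel. norm (f (x + h) - f x)) < e)"

lemma L1_translation_continuous_indicator:
  fixes A :: "'a::euclidean_space set"
  assumes A[measurable]: "A \<in> sets borel" and A_fin: "emeasure lborel A < \<infinity>"
  shows "L1_translation_continuous (indicator A :: 'a \<Rightarrow> real)"
  unfolding L1_translation_continuous_def
proof (intro allI impI)
  fix e :: real assume "e > 0"
  obtain T U where T: "compact T" "T \<subseteq> A" and U: "open U" "A \<subseteq> U"
    and UT: "emeasure lborel (U - T) < ennreal (e/2)"
    using lborel_compact_open_approx[OF A A_fin, of "e/2"] \<open>e > 0\<close> by auto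
  define D where "D = U - T"
  have [measurable]: "D \<in> sets borel"
    using T(1) U(1) by (simp add: D_def compact_imp_closed)
  have D_fin: "emeasure lborel D < \<infinity>"
    using UT by (simp add: D_def order.strict_trans)
  then have D_int: "integrable lborel (indicator D :: 'a \<Rightarrow> real)"
    by simp
  have "ennreal (measure lborel D) < ennreal (e/2)"
    using UT D_fin by (simp add: D_def emeasure_eq_ennreal_measure)
  then have "measure lborel D < e/2"
    by (simp add: ennreal_less_iff)
  have "T \<inter> - U = {}"
    using T(2) U(2) by auto
  then obtain d where d: "d > 0" "\<forall>x\<in>T. \<forall>y\<in>- U. d \<le> dist x y"
    using separate_compact_closed[OF T(1) closed_Compl[OF U(1)]] by blast
  have "(LINT x|lborel. norm (indicator A (x + h) - indicator A x :: real)) < e" if h: "norm h < d" for h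
  proof -
    have near: "x + h \<in> U" "x - h \<in> U" if "x \<in> T" for x
      using d(2) that h by (force simp: dist_norm)+
    have "norm (indicator A (x + h) - indicator A x :: real) \<le> indicator D (x + h) + indicator D x" for x
      using near[of x] near[of "x + h"] T(2) U(2) by (auto simp: indicator_def D_def)
    then have "(LINT x|lborel. norm (indicator A (x + h) - indicator A x :: real))
        \<le> (LINT x|lborel. indicator D (x + h) + indicator D x)"
      using D_int A_fin by (intro integral_mono) (auto simp: lborel_integrable_translate_iff)
    also have "\<dots> = 2 * measure lborel D"
      using D_int by (simp add: lborel_integrable_translate_iff lborel_integral_translate[of "indicator D"])
    finally show ?thesis
      using \<open>measure lborel D < e/2\<close> by simp
  qed
  with d(1) show "\<exists>d>0. \<forall>h. norm h < d \<longrightarrow> (LINT x|lborel. norm (indicator A (x + h) - indicator A x :: real)) < e"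
    by blast
qed

lemma L1_translation_continuous_scaleR:
  fixes f :: "'a::euclidean_space \<Rightarrow> real" and c :: "'b::{banach, second_countable_topology}"
  assumes "L1_translation_continuous f"
  shows "L1_translation_continuous (\<lambda>x. f x *\<^sub>R c)"
  unfolding L1_translation_continuous_def
proof (intro allI impI)
  fix e :: real assume "e > 0"
  have "norm c + 1 > 0"
    by (simp add: add_nonneg_pos)
  with \<open>e > 0\<close> have "e / (norm c + 1) > 0"
    by simp
  then obtain d where "d > 0" and d: "\<And>h. norm h < d \<Longrightarrow> (LINT x|lborel. norm (f (x + h) - f x)) < e / (norm c + 1)"
    using assms unfolding L1_translation_continuous_def by blast
  have "(LINT x|lborel. norm (f (x + h) *\<^sub>R c - f x *\<^sub>R c)) < e" if "norm h < d" for h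
  proof -
    have "(LINT x|lborel. norm (f (x + h) *\<^sub>R c - f x *\<^sub>R c)) = (LINT x|lborel. norm (f (x + h) - f x)) * norm c"
      unfolding scaleR_left_diff_distrib[symmetric] norm_scaleR by simp
    also have "\<dots> \<le> e / (norm c + 1) * norm c"
      using d[OF that] by (intro mult_right_mono) auto
    also have "\<dots> < e / (norm c + 1) * (norm c + 1)"
      using \<open>e / (norm c + 1) > 0\<close> by (intro mult_strict_left_mono) auto
    also have "\<dots> = e"
      using \<open>norm c + 1 > 0\<close> by simp
    finally show ?thesis .
  qed
  with \<open>d > 0\<close> show "\<exists>d>0. \<forall>h. norm h < d \<longrightarrow> (LINT x|lborel. norm (f (x + h) *\<^sub>R c - f x *\<^sub>R c)) < e"
    by blast
qed

lemma L1_translation_continuous_add: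
  fixes f g :: "'a::euclidean_space \<Rightarrow> 'b::{banach, second_countable_topology}"
  assumes f: "integrable lborel f" "L1_translation_continuous f"
    and g: "integrable lborel g" "L1_translation_continuous g"
  shows "L1_translation_continuous (\<lambda>x. f x + g x)"
  unfolding L1_translation_continuous_def
proof (intro allI impI)
  fix e :: real assume "e > 0"
  then have "e/2 > 0"
    by simp
  then obtain d1 d2 where "d1 > 0" "d2 > 0"
    and d1: "\<And>h. norm h < d1 \<Longrightarrow> (LINT x|lborel. norm (f (x + h) - f x)) < e/2"
    and d2: "\<And>h. norm h < d2 \<Longrightarrow> (LINT x|lborel. norm (g (x + h) - g x)) < e/2"
    using f(2) g(2) unfolding L1_translation_continuous_def by blast
  have "(LINT x|lborel. norm ((f (x + h) + g (x + h)) - (f x + g x))) < e" if "norm h < min d1 d2" for h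
  proof -
    have int: "integrable lborel (\<lambda>x. f (x + h))" "integrable lborel (\<lambda>x. g (x + h))"
      using f(1) g(1) by (simp_all add: lborel_integrable_translate_iff)
    have "(LINT x|lborel. norm ((f (x + h) + g (x + h)) - (f x + g x)))
        \<le> (LINT x|lborel. norm (f (x + h) - f x) + norm (g (x + h) - g x))"
      using int f(1) g(1) by (intro integral_mono norm_diff_triangle_ineq) auto
    also have "\<dots> < e"
      using int f(1) g(1) d1[of h] d2[of h] that by simp
    finally show ?thesis .
  qed
  with \<open>d1 > 0\<close> \<open>d2 > 0\<close>
  show "\<exists>d>0. \<forall>h. norm h < d \<longrightarrow> (LINT x|lborel. norm ((f (x + h) + g (x + h)) - (f x + g x))) < e"
    by (intro exI[of _ "min d1 d2"]) auto
qed

lemma L1_translation_continuous_L1_limit: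
  fixes f :: "'a::euclidean_space \<Rightarrow> 'b::{banach, second_countable_topology}"
  assumes f: "integrable lborel f" and s: "\<And>i. integrable lborel (s i)" "\<And>i. L1_translation_continuous (s i)"
    and lim: "(\<lambda>i. LINT x|lborel. norm (s i x - f x)) \<longlonglongrightarrow> 0"
  shows "L1_translation_continuous f"
  unfolding L1_translation_continuous_def
proof (intro allI impI)
  have triangle: "norm (a - d) \<le> norm (b - a) + norm (b - c) + norm (c - d)" for a b c d :: 'b
    by (intro norm_diff_triangle_le[where y=c] norm_diff_triangle_le[where y=b])
       (simp_all add: norm_minus_commute)
  fix e :: real assume "e > 0"
  then obtain i where i: "(LINT x|lborel. norm (s i x - f x)) < e/3"
    using order_tendstoD(2)[OF lim, of "e/3"] by (auto simp: eventually_sequentially)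
  obtain d where "d > 0" and d: "\<And>h. norm h < d \<Longrightarrow> (LINT x|lborel. norm (s i (x + h) - s i x)) < e/3"
    using s(2)[of i] \<open>e > 0\<close> unfolding L1_translation_continuous_def by (meson divide_pos_pos zero_less_numeral)
  have "(LINT x|lborel. norm (f (x + h) - f x)) < e" if "norm h < d" for h
  proof -
    have int: "integrable lborel (\<lambda>x. norm (s i x - f x))"
      "integrable lborel (\<lambda>x. norm (s i (x + h) - f (x + h)))"
      "integrable lborel (\<lambda>x. norm (s i (x + h) - s i x))"
      "integrable lborel (\<lambda>x. norm (f (x + h) - f x))"
      using f s(1)[of i] by (auto simp: lborel_integrable_translate_iff)
    have "(LINT x|lborel. norm (f (x + h) - f x))
        \<le> (LINT x|lborel. norm (s i (x + h) - f (x + h)) + norm (s i (x + h) - s i x) + norm (s i x - f x))"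
      using int triangle by (intro integral_mono) auto
    also have "\<dots> = 2 * (LINT x|lborel. norm (s i x - f x)) + (LINT x|lborel. norm (s i (x + h) - s i x))"
      using int lborel_integral_translate[of "\<lambda>x. norm (s i x - f x)" h] by simp
    also have "\<dots> < e"
      using i d[OF that] by simp
    finally show ?thesis .
  qed
  with \<open>d > 0\<close> show "\<exists>d>0. \<forall>h. norm h < d \<longrightarrow> (LINT x|lborel. norm (f (x + h) - f x)) < e"
    by blast
qed

lemma integrable_imp_L1_translation_continuous:
  fixes f :: "'a::euclidean_space \<Rightarrow> 'b::{banach, second_countable_topology}"
  assumes "integrable lborel f"
  shows "L1_translation_continuous f"
  using assms
proof (induction rule: integrable_induct)
  case (base A c)
  show ?case
    by (rule L1_translation_continuous_scaleR[OF L1_translation_continuous_indicator]) (use base in auto)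
next
  case (add f g)
  show ?case
    by (rule L1_translation_continuous_add[OF add.hyps(1) add.IH(1) add.hyps(2) add.IH(2)])
next
  case (lim f s)
  have [measurable]: "f \<in> borel_measurable lborel" "\<And>i. s i \<in> borel_measurable lborel"
    using lim.hyps by auto
  have "(\<lambda>i. LINT x|lborel. norm (s i x - f x)) \<longlonglongrightarrow> (LINT (x::'a)|lborel. 0)"
  proof (rule integral_dominated_convergence[where w="\<lambda>x. 3 * norm (f x)"])
    show "AE x in lborel. (\<lambda>i. norm (s i x - f x)) \<longlonglongrightarrow> 0"
      using lim.hyps(2) by (intro AE_I2) (simp add: tendsto_norm_zero LIM_zero)
    show "AE x in lborel. norm (norm (s i x - f x)) \<le> 3 * norm (f x)" for i
    proof (intro AE_I2)
      fix x
      have "norm (s i x) \<le> 2 * norm (f x)"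
        using lim.hyps(3) by simp
      then show "norm (norm (s i x - f x)) \<le> 3 * norm (f x)"
        using norm_triangle_ineq4[of "s i x" "f x"] by simp
    qed
  qed (use lim.hyps in auto)
  then have "(\<lambda>i. LINT x|lborel. norm (s i x - f x)) \<longlonglongrightarrow> 0"
    by simp
  then show ?case
    by (rule L1_translation_continuous_L1_limit[OF lim.hyps(4) lim.hyps(1) lim.IH])
qed

lemma integrable_conv_bounded:
  fixes f g :: "'a::euclidean_space \<Rightarrow> real"
  assumes f: "integrable lborel f" and [measurable]: "g \<in> borel_measurable lborel"
    and g_bound: "\<And>y. \<bar>g y\<bar> \<le> C"
  shows "integrable lborel (\<lambda>y. f (x - y) * g y)"
proof (rule Bochner_Integration.integrable_bound)
  show "integrable lborel (\<lambda>y. C * f (x - y))"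
    using f by (simp add: lborel_integrable_reflect_iff)
  show "AE y in lborel. norm (f (x - y) * g y) \<le> norm (C * f (x - y))"
  proof (intro AE_I2)
    fix y
    have "\<bar>g y\<bar> \<le> \<bar>C\<bar>"
      using g_bound[of y] by linarith
    from mult_left_mono[OF this abs_ge_zero[of "f (x - y)"]]
    show "norm (f (x - y) * g y) \<le> norm (C * f (x - y))"
      by (simp add: abs_mult mult.commute)
  qed
qed (use f in measurable)

lemma continuous_on_conv_bounded:
  fixes f g :: "'a::euclidean_space \<Rightarrow> real"
  assumes f: "integrable lborel f" and g[measurable]: "g \<in> borel_measurable lborel"
    and g_bound: "\<And>y. \<bar>g y\<bar> \<le> C"
  shows "continuous_on UNIV (conv f g)"
  unfolding continuous_on_iff
proof (intro ballI allI impI)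
  fix x :: 'a and e :: real assume "e > 0"
  have "C \<ge> 0"
    using g_bound[of 0] by simp
  then have "e / (C + 1) > 0"
    using \<open>e > 0\<close> by simp
  then obtain d where "d > 0" and d: "\<And>h. norm h < d \<Longrightarrow> (LINT z|lborel. norm (f (z + h) - f z)) < e / (C + 1)"
    using integrable_imp_L1_translation_continuous[OF f] unfolding L1_translation_continuous_def by blast
  have "dist (conv f g x') (conv f g x) < e" if "dist x' x < d" for x'
  proof -
    have int: "integrable lborel (\<lambda>y. f (x' - y) * g y)" "integrable lborel (\<lambda>y. f (x - y) * g y)"
      "integrable lborel (\<lambda>y. \<bar>f (x' - y) - f (x - y)\<bar>)"
      using integrable_conv_bounded[OF f g g_bound] f by (auto simp: lborel_integrable_reflect_iff)
    have "dist (conv f g x') (conv f g x) = \<bar>LINT y|lborel. (f (x' - y) - f (x - y)) * g y\<bar>"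
      using int by (simp add: conv_def dist_real_def left_diff_distrib)
    also have "\<dots> \<le> (LINT y|lborel. \<bar>f (x' - y) - f (x - y)\<bar> * C)"
    proof (intro order.trans[OF integral_abs_bound] integral_mono)
      show "integrable lborel (\<lambda>y. \<bar>(f (x' - y) - f (x - y)) * g y\<bar>)"
        using int by (simp add: left_diff_distrib)
      show "\<bar>(f (x' - y) - f (x - y)) * g y\<bar> \<le> \<bar>f (x' - y) - f (x - y)\<bar> * C" for y
        using mult_left_mono[OF g_bound abs_ge_zero] by (simp add: abs_mult)
    qed (use int in simp)
    also have "\<dots> = (LINT z|lborel. \<bar>f (z + (x' - x)) - f z\<bar>) * C"
      using lborel_integral_reflect[of "\<lambda>z. \<bar>f (z + (x' - x)) - f z\<bar>" x] by (simp add: algebra_simps)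
    also have "\<dots> \<le> e / (C + 1) * C"
      using d[of "x' - x"] that \<open>C \<ge> 0\<close> by (intro mult_right_mono) (auto simp: dist_norm)
    also have "\<dots> < e"
      using \<open>e > 0\<close> \<open>C \<ge> 0\<close> by (simp add: field_simps)
    finally show ?thesis .
  qed
  with \<open>d > 0\<close> show "\<exists>d>0. \<forall>x'\<in>UNIV. dist x' x < d \<longrightarrow> dist (conv f g x') (conv f g x) < e"
    by blast
qed

lemma conv_cong_AE:
  fixes K g g' :: "'a::euclidean_space \<Rightarrow> real"
  assumes [measurable]: "K \<in> borel_measurable borel" "g \<in> borel_measurable borel" "g' \<in> borel_measurable borel"
    and "AE y in lborel. g y = g' y"
  shows "conv K g = conv K g'"
  unfolding conv_def using assms by (intro ext integral_cong_AE) auto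

lemma conv_reflect:
  fixes K g :: "'a::euclidean_space \<Rightarrow> real"
  shows "conv K g x = (LINT z|lborel. K z * g (x - z))"
  unfolding conv_def using lborel_integral_reflect[of "\<lambda>y. K (x - y) * g y" x] by simp

lemma nn_integral_conv_assoc:
  fixes K L g :: "'a::euclidean_space \<Rightarrow> ennreal"
  assumes [measurable]: "K \<in> borel_measurable borel" "L \<in> borel_measurable borel" "g \<in> borel_measurable borel"
  shows "(\<integral>\<^sup>+y. K (x - y) * (\<integral>\<^sup>+z. L (y - z) * g z \<partial>lborel) \<partial>lborel)
       = (\<integral>\<^sup>+z. (\<integral>\<^sup>+y. K (x - y) * L (y - z) \<partial>lborel) * g z \<partial>lborel)"
proof -
  have "(\<integral>\<^sup>+y. K (x - y) * (\<integral>\<^sup>+z. L (y - z) * g z \<partial>lborel) \<partial>lborel)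
      = (\<integral>\<^sup>+y. (\<integral>\<^sup>+z. K (x - y) * L (y - z) * g z \<partial>lborel) \<partial>lborel)"
    by (simp add: nn_integral_cmult mult.assoc)
  also have "\<dots> = (\<integral>\<^sup>+z. (\<integral>\<^sup>+y. K (x - y) * L (y - z) * g z \<partial>lborel) \<partial>lborel)"
    by (rule lborel_pair.Fubini'[symmetric]) measurable
  also have "\<dots> = (\<integral>\<^sup>+z. (\<integral>\<^sup>+y. K (x - y) * L (y - z) \<partial>lborel) * g z \<partial>lborel)"
    by (simp add: nn_integral_multc)
  finally show ?thesis .
qed

lemma nn_integral_conv:
  fixes K g :: "'a::euclidean_space \<Rightarrow> ennreal"
  assumes [measurable]: "K \<in> borel_measurable borel" "g \<in> borel_measurable borel"
  shows "(\<integral>\<^sup>+x. (\<integral>\<^sup>+y. K (x - y) * g y \<partial>lborel) \<partial>lborel)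
       = (\<integral>\<^sup>+z. K z \<partial>lborel) * (\<integral>\<^sup>+y. g y \<partial>lborel)"
proof -
  have translate: "(\<integral>\<^sup>+x. K (x - y) \<partial>lborel) = (\<integral>\<^sup>+z. K z \<partial>lborel)" for y
    using nn_integral_lborel_translate[of K "- y"] by simp
  have "(\<integral>\<^sup>+x. (\<integral>\<^sup>+y. K (x - y) * g y \<partial>lborel) \<partial>lborel)
      = (\<integral>\<^sup>+y. (\<integral>\<^sup>+x. K (x - y) * g y \<partial>lborel) \<partial>lborel)"
    by (rule lborel_pair.Fubini'[symmetric]) measurable
  also have "\<dots> = (\<integral>\<^sup>+y. (\<integral>\<^sup>+z. K z \<partial>lborel) * g y \<partial>lborel)"
    by (simp add: nn_integral_multc translate)
  finally show ?thesis
    by (simp add: nn_integral_cmult)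
qed

definition pos_root :: "real \<Rightarrow> real \<Rightarrow> real" where
  "pos_root b q = (sqrt (b\<^sup>2 + 4 * q) - b) / 2"

lemma pos_root_nonneg: "0 \<le> q \<Longrightarrow> 0 \<le> pos_root b q"
  unfolding pos_root_def using real_sqrt_le_mono[of "b\<^sup>2" "b\<^sup>2 + 4 * q"] by simp

lemma pos_root_eq: "0 \<le> q \<Longrightarrow> (pos_root b q)\<^sup>2 + b * pos_root b q = q"
  unfolding pos_root_def by (simp add: power2_eq_square field_simps)

lemma pos_root_unique:
  assumes "0 \<le> r" "0 < q" "r\<^sup>2 + b * r = q"
  shows "r = pos_root b q"
proof (rule ccontr)
  let ?s = "pos_root b q"
  assume "r \<noteq> ?s"
  moreover have "(r - ?s) * (r + ?s + b) = 0"
    using assms(3) pos_root_eq[of q b] assms(2) by (simp add: algebra_simps power2_eq_square)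
  ultimately have "r + b = - ?s"
    by simp
  have "q = r * (r + b)"
    using assms(3) by (simp add: algebra_simps power2_eq_square)
  also have "\<dots> = - (r * ?s)"
    using \<open>r + b = - ?s\<close> by simp
  finally have "q = - (r * ?s)" .
  moreover have "r * ?s \<ge> 0"
    using assms(1,2) pos_root_nonneg[of q b] by simp
  ultimately show False
    using assms(2) by simp
qed

lemma pos_root_pos: "0 < q \<Longrightarrow> 0 < pos_root b q"
  using pos_root_eq[of q b] pos_root_nonneg[of q b] by (fastforce simp: le_less)

lemma pos_root_le:
  assumes "0 \<le> q" "0 < d" "d \<le> b"
  shows "pos_root b q \<le> q / d"
proof -
  let ?r = "pos_root b q"
  have "?r * d \<le> ?r * b"
    using assms pos_root_nonneg[of q b] by (simp add: mult_left_mono)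
  also have "\<dots> = q - ?r\<^sup>2"
    using pos_root_eq[OF assms(1), of b] by (simp add: algebra_simps)
  also have "\<dots> \<le> q"
    by simp
  finally show ?thesis
    using assms(2) by (simp add: pos_le_divide_eq)
qed

lemma continuous_on_pos_root [continuous_intros]:
  assumes "continuous_on S b" "continuous_on S q" "\<And>x. x \<in> S \<Longrightarrow> 0 \<le> q x"
  shows "continuous_on S (\<lambda>x. pos_root (b x) (q x))"
  unfolding pos_root_def using assms by (intro continuous_intros) auto

lemma bounded_nonneg_representative:
  fixes u :: "'a::euclidean_space \<Rightarrow> real"
  assumes [measurable]: "u \<in> borel_measurable lborel"
    and "AE x in lborel. \<bar>u x\<bar> \<le> C" and "AE x in lborel. 0 \<le> u x"
  obtains g where "g \<in> borel_measurable borel" "\<And>x. 0 \<le> g x" "\<And>x. g x \<le> max C 0"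
    "AE x in lborel. u x = g x"
proof
  show "(\<lambda>x. max 0 (min (max C 0) (u x))) \<in> borel_measurable borel"
    by measurable
  show "AE x in lborel. u x = max 0 (min (max C 0) (u x))"
    using assms(2,3) by eventually_elim auto
qed auto

locale symmetric_prob_kernel =
  fixes K :: "'a::euclidean_space \<Rightarrow> real"
  assumes integrable: "integrable lborel K"
    and nonneg: "\<And>z. 0 \<le> K z"
    and symmetric: "\<And>z. K (- z) = K z"
    and mass: "(LINT z|lborel. K z) = 1"
begin

lemma borel_measurable_kernel[measurable]: "K \<in> borel_measurable borel"
  using integrable by auto

lemma nn_integral_eq_1: "(\<integral>\<^sup>+z. ennreal (K z) \<partial>lborel) = 1"
  using integrable nonneg mass by (subst nn_integral_eq_integral) auto

lemma conv_nonneg: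
  assumes "\<And>y. 0 \<le> g y"
  shows "0 \<le> conv K g x"
  unfolding conv_def using assms nonneg by (intro integral_nonneg_AE AE_I2) simp

lemma continuous_on_conv:
  assumes "g \<in> borel_measurable borel" and "\<And>y. 0 \<le> g y" "\<And>y. g y \<le> C"
  shows "continuous_on UNIV (conv K g)"
  using assms by (intro continuous_on_conv_bounded[OF integrable, of _ C]) auto

lemma conv_eq_0_iff_AE:
  assumes [measurable]: "g \<in> borel_measurable lborel" and "\<And>y. 0 \<le> g y" "\<And>y. g y \<le> C"
  shows "conv K g x = 0 \<longleftrightarrow> (AE y in lborel. K (x - y) * g y = 0)"
proof -
  have "\<bar>g y\<bar> \<le> C" for y
    using assms(2,3)[of y] by simp
  then have "integrable lborel (\<lambda>y. K (x - y) * g y)"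
    by (rule integrable_conv_bounded[OF integrable assms(1)])
  then show ?thesis
    unfolding conv_def using assms(2) nonneg by (subst integral_nonneg_eq_0_iff_AE) auto
qed

text \<open>Truncating \<open>K\<close> at height 1 makes its self-convolution continuous; that of \<open>K\<close> itself
  need not be.\<close>

definition truncated :: "'a \<Rightarrow> real" where
  "truncated z = min (K z) 1"

lemma truncated_bounds: "\<bar>truncated z\<bar> \<le> 1" "0 \<le> truncated z" "truncated z \<le> K z"
  using nonneg[of z] by (auto simp: truncated_def)

lemma borel_measurable_truncated[measurable]: "truncated \<in> borel_measurable borel"
  unfolding truncated_def by measurable

lemma integrable_truncated: "integrable lborel truncated"
  by (intro Bochner_Integration.integrable_bound[OF integrable] AE_I2) (use truncated_bounds nonneg in auto)

lemma conv_truncated_pos_at_0: "conv truncated truncated 0 > 0"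
proof (rule ccontr)
  have int: "integrable lborel (\<lambda>s. truncated (0 - s) * truncated s)"
    using truncated_bounds by (intro integrable_conv_bounded[OF integrable_truncated]) auto
  have nonneg0: "AE s in lborel. 0 \<le> truncated (0 - s) * truncated s"
    using truncated_bounds by (intro AE_I2) simp
  assume "\<not> conv truncated truncated 0 > 0"
  moreover have "conv truncated truncated 0 \<ge> 0"
    unfolding conv_def using nonneg0 by (rule integral_nonneg_AE)
  ultimately have "(LINT s|lborel. truncated (0 - s) * truncated s) = 0"
    unfolding conv_def by simp
  then have "AE s in lborel. truncated (0 - s) * truncated s = 0"
    using integral_nonneg_eq_0_iff_AE[OF int nonneg0] by simp
  then have "AE s in lborel. K s = 0"
    by eventually_elim (use symmetric nonneg in \<open>auto simp: truncated_def\<close>)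
  then have "(LINT s|lborel. K s) = 0"
    by (rule integral_eq_zero_AE)
  then show False
    using mass by simp
qed

lemma nn_integral_self_conv_pos_near_diagonal:
  obtains r where "r > 0" "\<And>x z. dist x z < r \<Longrightarrow> (\<integral>\<^sup>+y. ennreal (K (x - y) * K (y - z)) \<partial>lborel) \<noteq> 0"
proof -
  let ?G = "conv truncated truncated"
  have "continuous_on UNIV ?G"
    using truncated_bounds by (intro continuous_on_conv_bounded[OF integrable_truncated]) auto
  then obtain r where "r > 0" and r: "\<And>t. dist t 0 < r \<Longrightarrow> dist (?G t) (?G 0) < ?G 0"
    using conv_truncated_pos_at_0 unfolding continuous_on_iff by (metis UNIV_I)
  have "(\<integral>\<^sup>+y. ennreal (K (x - y) * K (y - z)) \<partial>lborel) \<noteq> 0" if "dist x z < r" for x z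
  proof -
    have "ennreal (?G (x - z)) = (\<integral>\<^sup>+s. ennreal (truncated (x - z - s) * truncated s) \<partial>lborel)"
      unfolding conv_def using truncated_bounds
      by (intro nn_integral_eq_integral[symmetric] integrable_conv_bounded[OF integrable_truncated]) auto
    also have "\<dots> = (\<integral>\<^sup>+s. ennreal (truncated (x - (s + z)) * truncated ((s + z) - z)) \<partial>lborel)"
      by (simp add: algebra_simps)
    also have "\<dots> = (\<integral>\<^sup>+y. ennreal (truncated (x - y) * truncated (y - z)) \<partial>lborel)"
      by (rule nn_integral_lborel_translate) measurable
    also have "\<dots> \<le> (\<integral>\<^sup>+y. ennreal (K (x - y) * K (y - z)) \<partial>lborel)"
      using truncated_bounds nonneg by (intro nn_integral_mono ennreal_leI mult_mono) auto
    finally have "ennreal (?G (x - z)) \<le> (\<integral>\<^sup>+y. ennreal (K (x - y) * K (y - z)) \<partial>lborel)" .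
    moreover have "?G (x - z) > 0"
      using r[of "x - z"] that by (auto simp: dist_norm dist_real_def)
    ultimately show ?thesis
      by auto
  qed
  with \<open>r > 0\<close> show ?thesis
    using that by blast
qed

lemma ennreal_conv_eq_nn_integral:
  assumes [measurable]: "g \<in> borel_measurable borel" and "\<And>y. 0 \<le> g y" "\<And>y. g y \<le> C"
  shows "ennreal (conv K g x) = (\<integral>\<^sup>+y. ennreal (K (x - y)) * ennreal (g y) \<partial>lborel)"
proof -
  have "\<bar>g y\<bar> \<le> C" for y
    using assms(2,3)[of y] by simp
  then have "integrable lborel (\<lambda>y. K (x - y) * g y)"
    by (intro integrable_conv_bounded[OF integrable]) auto
  then show ?thesis
    unfolding conv_def using assms(2) nonneg
    by (subst nn_integral_eq_integral[symmetric]) (auto simp: ennreal_mult)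
qed

lemma open_conv_zero_set:
  assumes g[measurable]: "g \<in> borel_measurable borel"
    and g_nonneg: "\<And>y. 0 \<le> g y" and g_bound: "\<And>y. g y \<le> C"
    and zero: "AE y in lborel. g y = 0 \<longrightarrow> conv K g y = 0"
  shows "open {x. conv K g x = 0}"
  unfolding open_contains_ball
proof (intro ballI)
  have cont: "continuous_on UNIV (conv K g)"
    using g g_nonneg g_bound by (rule continuous_on_conv)
  have [measurable]: "conv K g \<in> borel_measurable borel"
    using cont by (rule borel_measurable_continuous_onI)
  obtain r where "r > 0"
    and r: "\<And>x z. dist x z < r \<Longrightarrow> (\<integral>\<^sup>+y. ennreal (K (x - y) * K (y - z)) \<partial>lborel) \<noteq> 0"
    using nn_integral_self_conv_pos_near_diagonal by blast
  fix x assume "x \<in> {x. conv K g x = 0}"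
  then have "AE y in lborel. K (x - y) * g y = 0"
    using conv_eq_0_iff_AE[OF _ g_nonneg g_bound] by simp
  then have "AE y in lborel. ennreal (K (x - y)) * ennreal (conv K g y) = 0"
    using zero by eventually_elim (use nonneg g_nonneg in auto)
  then have "(\<integral>\<^sup>+y. ennreal (K (x - y)) * ennreal (conv K g y) \<partial>lborel) = 0"
    by (simp add: nn_integral_0_iff_AE)
  then have "(\<integral>\<^sup>+z. (\<integral>\<^sup>+y. ennreal (K (x - y)) * ennreal (K (y - z)) \<partial>lborel) * ennreal (g z) \<partial>lborel) = 0"
    using nn_integral_conv_assoc[of "\<lambda>z. ennreal (K z)" "\<lambda>z. ennreal (K z)" "\<lambda>z. ennreal (g z)" x]
    by (simp add: ennreal_conv_eq_nn_integral[OF g g_nonneg g_bound])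
  then have "AE z in lborel. (\<integral>\<^sup>+y. ennreal (K (x - y) * K (y - z)) \<partial>lborel) * ennreal (g z) = 0"
    by (simp add: nn_integral_0_iff_AE ennreal_mult nonneg)
  then have "AE z in lborel. z \<in> ball x r \<longrightarrow> conv K g z \<le> 0"
    using zero by eventually_elim (use r g_nonneg in auto)
  then have "\<forall>z\<in>ball x r. conv K g z \<le> 0"
    using cont by (intro continuous_AE_le_imp_le) auto
  then have "ball x r \<subseteq> {x. conv K g x = 0}"
    using conv_nonneg[OF g_nonneg] by (auto intro: antisym)
  with \<open>r > 0\<close> show "\<exists>r>0. ball x r \<subseteq> {x. conv K g x = 0}"
    by blast
qed

lemma conv_pos_or_AE_zero:
  assumes g[measurable]: "g \<in> borel_measurable borel"
    and g_nonneg: "\<And>y. 0 \<le> g y" and g_bound: "\<And>y. g y \<le> C"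
    and zero: "AE y in lborel. g y = 0 \<longrightarrow> conv K g y = 0"
  shows "(\<forall>x. conv K g x > 0) \<or> (AE x in lborel. g x = 0)"
proof -
  let ?Z = "{x. conv K g x = 0}"
  have "continuous_on UNIV (conv K g)"
    using g g_nonneg g_bound by (rule continuous_on_conv)
  then have "closed ?Z"
    by (intro closed_Collect_eq continuous_intros) auto
  with open_conv_zero_set[OF assms] have "?Z = {} \<or> ?Z = UNIV"
    by (intro iffD1[OF clopen] conjI)
  then show ?thesis
  proof
    assume "?Z = {}"
    then have "conv K g x \<noteq> 0" for x
      by (simp add: Collect_empty_eq)
    then show ?thesis
      using conv_nonneg[OF g_nonneg] by (simp add: less_le)
  next
    assume "?Z = UNIV"
    then have "conv K g x = 0" for x
      by (simp add: set_eq_iff)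
    then have "(\<integral>\<^sup>+x. ennreal (conv K g x) \<partial>lborel) = 0"
      by simp
    also have "(\<integral>\<^sup>+x. ennreal (conv K g x) \<partial>lborel) = (\<integral>\<^sup>+y. ennreal (g y) \<partial>lborel)"
      using nn_integral_conv[of "\<lambda>z. ennreal (K z)" "\<lambda>y. ennreal (g y)"]
      by (simp add: ennreal_conv_eq_nn_integral[OF g g_nonneg g_bound] nn_integral_eq_1)
    finally have "AE y in lborel. ennreal (g y) = 0"
      by (simp add: nn_integral_0_iff_AE)
    then have "AE y in lborel. g y = 0"
      by eventually_elim (use g_nonneg in \<open>simp add: order_antisym\<close>)
    then show ?thesis
      by (rule disjI2)
  qed
qed

lemma tendsto_tail_integral:
  "(\<lambda>n. LINT z|lborel. K z * indicator (- ball 0 (real n)) z) \<longlonglongrightarrow> 0"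
proof -
  have "(\<lambda>n. LINT z|lborel. K z * indicator (- ball 0 (real n)) z) \<longlonglongrightarrow> (LINT (z::'a)|lborel. 0 :: real)"
  proof (rule integral_dominated_convergence[where w=K])
    show "AE z in lborel. (\<lambda>n. K z * indicator (- ball 0 (real n)) z) \<longlonglongrightarrow> 0"
    proof (intro AE_I2 tendsto_eventually)
      fix z :: 'a
      obtain N :: nat where "norm z < real N"
        using reals_Archimedean2 by blast
      then show "eventually (\<lambda>n. K z * indicator (- ball 0 (real n)) z = 0) sequentially"
        unfolding eventually_sequentially by (intro exI[of _ N]) (auto simp: indicator_def)
    qed
    show "AE z in lborel. norm (K z * indicator (- ball 0 (real n)) z) \<le> K z" for n
      using nonneg by (intro AE_I2) (auto simp: indicator_def)
  qed (use integrable in auto)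
  then show ?thesis
    by simp
qed

lemma eventually_conv_le:
  assumes [measurable]: "v \<in> borel_measurable borel"
    and v_nonneg: "\<And>x. 0 \<le> v x" and v_bound: "\<And>x. v x \<le> V"
    and v_le: "eventually (\<lambda>x. v x \<le> B) at_infinity" and "0 \<le> B" and "\<delta> > 0"
  shows "eventually (\<lambda>x. conv K v x \<le> B + \<delta>) at_infinity"
proof -
  obtain R where R: "\<And>x. norm x \<ge> R \<Longrightarrow> v x \<le> B"
    using v_le unfolding eventually_at_infinity by blast
  have "V \<ge> 0"
    using order.trans[OF v_nonneg v_bound] .
  then have "\<delta> / (V + 1) > 0"
    using \<open>\<delta> > 0\<close> by simp
  then obtain n where n: "(LINT z|lborel. K z * indicator (- ball 0 (real n)) z) < \<delta> / (V + 1)"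
    using order_tendstoD(2)[OF tendsto_tail_integral] by (auto simp: eventually_sequentially)
  have "conv K v x \<le> B + \<delta>" if x: "norm x \<ge> R + real n" for x
  proof -
    have pointwise: "K z * v (x - z) \<le> K z * B + V * (K z * indicator (- ball 0 (real n)) z)" for z
    proof (cases "norm z < real n")
      case True
      then have "norm (x - z) \<ge> R"
        using x norm_triangle_ineq2[of x z] by simp
      then show ?thesis
        using True R nonneg by (simp add: mult_left_mono)
    next
      case False
      then show ?thesis
        using mult_left_mono[OF v_bound[of "x - z"] nonneg[of z]]
          mult_nonneg_nonneg[OF \<open>0 \<le> B\<close> nonneg[of z]]
        by (simp add: algebra_simps)
    qed
    have int_tail: "integrable lborel (\<lambda>z. K z * indicator (- ball 0 (real n)) z)"
      by (intro Bochner_Integration.integrable_bound[OF integrable] AE_I2)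
         (auto simp: indicator_def nonneg)
    have "\<bar>v y\<bar> \<le> V" for y
      using v_nonneg[of y] v_bound[of y] by simp
    then have int_conv: "integrable lborel (\<lambda>z. K z * v (x - z))"
      using integrable_conv_bounded[OF integrable, of v V x] lborel_integrable_reflect_iff[of "\<lambda>y. K (x - y) * v y" x]
      by simp
    have "conv K v x = (LINT z|lborel. K z * v (x - z))"
      by (rule conv_reflect)
    also have "\<dots> \<le> (LINT z|lborel. K z * B + V * (K z * indicator (- ball 0 (real n)) z))"
      using pointwise integrable int_tail int_conv by (intro integral_mono) auto
    also have "\<dots> = B + V * (LINT z|lborel. K z * indicator (- ball 0 (real n)) z)"
      using integrable int_tail mass by simp
    also have "\<dots> \<le> B + V * (\<delta> / (V + 1))"
      using mult_left_mono[OF less_imp_le[OF n] \<open>V \<ge> 0\<close>] by simp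
    also have "\<dots> \<le> B + \<delta>"
      using \<open>V \<ge> 0\<close> \<open>\<delta> > 0\<close> by (simp add: field_simps)
    finally show ?thesis .
  qed
  then show ?thesis
    unfolding eventually_at_infinity by blast
qed

lemma eventually_le_iterated_contraction:
  assumes [measurable]: "v \<in> borel_measurable borel"
    and v_nonneg: "\<And>x. 0 \<le> v x" and v_bound: "\<And>x. v x \<le> V"
    and \<theta>: "0 \<le> \<theta>" "\<theta> < 1"
    and contracted: "eventually (\<lambda>x. v x \<le> \<theta> * conv K v x) at_infinity"
    and "e > 0"
  shows "eventually (\<lambda>x. v x \<le> \<theta> ^ k * V + e) at_infinity"
proof (induction k)
  case 0
  show ?case
    using v_bound \<open>e > 0\<close> by (intro always_eventually) (simp add: add_increasing2)
next
  case (Suc k)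
  \<comment> \<open>The slack \<open>(1 - \<theta>) e\<close> is absorbed because \<open>\<theta> (2 - \<theta>) \<le> 1\<close>.\<close>
  have "V \<ge> 0"
    using order.trans[OF v_nonneg v_bound] .
  then have "eventually (\<lambda>x. conv K v x \<le> (\<theta> ^ k * V + e) + (1 - \<theta>) * e) at_infinity"
    using \<theta> \<open>e > 0\<close> by (intro eventually_conv_le[OF _ v_nonneg v_bound Suc.IH]) auto
  with contracted show ?case
  proof eventually_elim
    case (elim x)
    have "v x \<le> \<theta> * ((\<theta> ^ k * V + e) + (1 - \<theta>) * e)"
      using elim \<theta> by (meson mult_left_mono order.trans)
    also have "\<dots> = \<theta> ^ Suc k * V + e - (1 - \<theta>)\<^sup>2 * e"
      by (simp add: algebra_simps power2_eq_square)
    also have "\<dots> \<le> \<theta> ^ Suc k * V + e"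
      using \<open>e > 0\<close> by simp
    finally show ?case .
  qed
qed

lemma tendsto_zero_if_le_contracted_conv:
  assumes v: "v \<in> borel_measurable borel" "\<And>x. 0 \<le> v x" "\<And>x. v x \<le> V"
    and \<theta>: "0 \<le> \<theta>" "\<theta> < 1"
    and contracted: "eventually (\<lambda>x. v x \<le> \<theta> * conv K v x) at_infinity"
  shows "(v \<longlongrightarrow> 0) at_infinity"
  unfolding tendsto_iff
proof (intro allI impI)
  fix e :: real assume "e > 0"
  have "(\<lambda>k. \<theta> ^ k * V) \<longlonglongrightarrow> 0"
    using \<theta> by (intro tendsto_mult_left_zero LIMSEQ_power_zero) auto
  then have "eventually (\<lambda>k. \<theta> ^ k * V < e/2) sequentially"
    using \<open>e > 0\<close> by (intro order_tendstoD(2)) auto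
  then obtain k where k: "\<theta> ^ k * V < e/2"
    by (auto simp: eventually_sequentially)
  from \<open>e > 0\<close> have "e/2 > 0"
    by simp
  from eventually_le_iterated_contraction[OF v \<theta> contracted this, of k]
  show "eventually (\<lambda>x. dist (v x) 0 < e) at_infinity"
    by eventually_elim (use k v(2) in simp)
qed

lemma steady_state_C0_if_conv_pos:
  fixes a g :: "'a \<Rightarrow> real" and c \<eta> B :: real
  assumes c: "c > 0" and \<eta>: "\<eta> > 0" and a_cont: "continuous_on UNIV a"
    and a_neg: "eventually (\<lambda>x. a x \<le> - \<eta>) at_infinity"
    and g[measurable]: "g \<in> borel_measurable borel" and g_nonneg: "\<And>x. 0 \<le> g x" and g_bound: "\<And>x. g x \<le> B"
    and g_eq: "AE x in lborel. (g x)\<^sup>2 + (c - a x) * g x = c * conv K g x"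
    and conv_pos: "\<And>x. conv K g x > 0"
  obtains v where "C0 v" "AE x in lborel. g x = v x" "\<And>x. v x > 0"
proof -
  define v where "v x = pos_root (c - a x) (c * conv K g x)" for x
  have conv_cont: "continuous_on UNIV (conv K g)"
    using g g_nonneg g_bound by (rule continuous_on_conv)
  have v_cont: "continuous_on UNIV v"
    unfolding v_def using c conv_pos
    by (intro continuous_intros a_cont conv_cont) (auto intro: less_imp_le)
  have [measurable]: "v \<in> borel_measurable borel"
    using v_cont by (rule borel_measurable_continuous_onI)
  have v_pos: "v x > 0" for x
    unfolding v_def using c conv_pos by (intro pos_root_pos) simp
  have g_v: "AE x in lborel. g x = v x"
    using g_eq by eventually_elim (use c conv_pos g_nonneg in \<open>auto simp: v_def intro: pos_root_unique\<close>)
  have "AE x in lborel. x \<in> UNIV \<longrightarrow> v x \<le> B"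
    using g_v by eventually_elim (metis g_bound)
  then have "\<forall>x\<in>UNIV. v x \<le> B"
    by (rule continuous_AE_le_imp_le[OF v_cont continuous_on_const open_UNIV])
  then have v_bound: "v x \<le> B" for x
    by simp
  have conv_v: "conv K v = conv K g"
    using g_v by (intro conv_cong_AE) auto
  have contracted: "eventually (\<lambda>x. v x \<le> c / (c + \<eta>) * conv K v x) at_infinity"
    using a_neg
  proof eventually_elim
    case (elim x)
    have "v x \<le> c * conv K g x / (c + \<eta>)"
      unfolding v_def using c \<eta> elim conv_pos[of x] by (intro pos_root_le) auto
    then show ?case
      by (simp add: conv_v)
  qed
  have "(v \<longlongrightarrow> 0) at_infinity"
    using c \<eta> v_pos
    by (intro tendsto_zero_if_le_contracted_conv[OF _ _ v_bound _ _ contracted]) (auto intro: less_imp_le)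
  with v_cont have "C0 v"
    by (simp add: C0_def)
  with g_v v_pos show ?thesis
    using that by blast
qed

lemma steady_state_C0:
  fixes a u :: "'a \<Rightarrow> real" and c \<eta> C :: real
  assumes c: "c > 0" and \<eta>: "\<eta> > 0" and a_cont: "continuous_on UNIV a"
    and a_neg: "eventually (\<lambda>x. a x \<le> - \<eta>) at_infinity"
    and u[measurable]: "u \<in> borel_measurable lborel"
    and u_bound: "AE x in lborel. \<bar>u x\<bar> \<le> C" and u_nonneg: "AE x in lborel. 0 \<le> u x"
    and u_eq: "AE x in lborel. c * (conv K u x - u x) + u x * (a x - u x) = 0"
  shows "\<exists>v. C0 v \<and> (AE x in lborel. u x = v x) \<and> ((\<forall>x. v x > 0) \<or> (\<forall>x. v x = 0))"
proof -
  obtain g where g[measurable]: "g \<in> borel_measurable borel"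
    and g_nonneg: "\<And>x. 0 \<le> g x" and g_bound: "\<And>x. g x \<le> max C 0" and u_g: "AE x in lborel. u x = g x"
    using bounded_nonneg_representative[OF u u_bound u_nonneg] by blast
  have conv_u: "conv K u = conv K g"
    using u_g by (intro conv_cong_AE) auto
  have g_eq: "AE x in lborel. (g x)\<^sup>2 + (c - a x) * g x = c * conv K g x"
    using u_eq u_g by eventually_elim (simp add: conv_u algebra_simps power2_eq_square)
  then have "AE x in lborel. g x = 0 \<longrightarrow> conv K g x = 0"
    by eventually_elim (use c in auto)
  from conv_pos_or_AE_zero[OF g g_nonneg g_bound this]
  show ?thesis
  proof
    assume "\<forall>x. conv K g x > 0"
    then obtain v where "C0 v" "AE x in lborel. g x = v x" "\<And>x. v x > 0"
      using steady_state_C0_if_conv_pos[OF c \<eta> a_cont a_neg g g_nonneg g_bound g_eq] by blast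
    with u_g show ?thesis
      by (intro exI[of _ v]) auto
  next
    assume "AE x in lborel. g x = 0"
    with u_g show ?thesis
      by (intro exI[of _ "\<lambda>_. 0"]) (auto simp: C0_def)
  qed
qed

end

lemma symmetric_prob_kernel_kernel_scale:
  fixes J :: "'a::euclidean_space \<Rightarrow> real"
  assumes "integrable lborel J" and "\<And>z. 0 \<le> J z"
    and "\<And>x y. norm x = norm y \<Longrightarrow> J x = J y" and "(LINT z|lborel. J z) = 1" and "eps > 0"
  shows "symmetric_prob_kernel (kernel_scale eps J)"
proof
  have scale: "kernel_scale eps J = (\<lambda>z. J (0 + (1 / eps) *\<^sub>R z) / eps ^ DIM('a))"
    by (simp add: kernel_scale_def fun_eq_iff divide_inverse_commute)
  show "integrable lborel (kernel_scale eps J)"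
    unfolding scale using lborel_integrable_affine[OF assms(1), of "1 / eps" 0] assms(5) by simp
  show "0 \<le> kernel_scale eps J z" for z
    using assms(2,5) by (simp add: kernel_scale_def)
  show "kernel_scale eps J (- z) = kernel_scale eps J z" for z
    unfolding kernel_scale_def by (subst assms(3)[of "(- z) /\<^sub>R eps" "z /\<^sub>R eps"]) auto
  have "(LINT z|lborel. J ((1 / eps) *\<^sub>R z)) = eps ^ DIM('a)"
    using lborel_integral_affine[of "1 / eps" J 0] assms(4,5) by (simp add: field_simps power_divide)
  then show "(LINT z|lborel. kernel_scale eps J z) = 1"
    unfolding scale using assms(5) by simp
qed

lemma Limsup_neg_imp_eventually_le:
  assumes "Limsup F (\<lambda>x. ereal (f x)) < 0"
  obtains \<eta> where "\<eta> > 0" "eventually (\<lambda>x. f x \<le> - \<eta>) F"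
proof -
  obtain z where z: "Limsup F (\<lambda>x. ereal (f x)) < ereal z" "z < 0"
    using ereal_dense2[OF assms] by auto
  have "eventually (\<lambda>x. f x \<le> z) F"
    using Limsup_lessD[OF z(1)] by eventually_elim auto
  then show ?thesis
    using that[of "- z"] z(2) by simp
qed

theorem proposition2p3:
  fixes a :: "'a::euclidean_space \<Rightarrow> real"
    and J :: "'a \<Rightarrow> real"
    and m eps0 :: real
    and u :: "real \<Rightarrow> 'a \<Rightarrow> real"
  assumes m_range: "0 \<le> m" "m \<le> 2"
    and a_cont: "continuous_on UNIV a"
    and a_Linf: "Linf a"
    and a_pos_part: "\<exists>x. a x > 0"
    and a_limsup: "Limsup at_infinity (\<lambda>x. ereal (a x)) < 0"
    and J_int: "integrable lborel J"
    and J_nonneg: "\<And>z. J z \<ge> 0"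
    and J_radial: "\<And>x y. norm x = norm y \<Longrightarrow> J x = J y"
    and J_mass: "(LINT z|lborel. J z) = 1"
    and eps0_pos: "eps0 > 0"
    and u_Linf: "\<And>eps. 0 < eps \<Longrightarrow> eps < eps0 \<Longrightarrow> Linf (u eps)"
    and u_nonneg: "\<And>eps. 0 < eps \<Longrightarrow> eps < eps0 \<Longrightarrow> AE x in lborel. u eps x \<ge> 0"
    and u_eq: "\<And>eps. 0 < eps \<Longrightarrow> eps < eps0 \<Longrightarrow>
       AE x in lborel. (1 / eps powr m) * (conv (kernel_scale eps J) (u eps) x - u eps x)
                        + u eps x * (a x - u eps x) = 0"
  shows "\<exists>eps1 > 0. \<forall>eps. 0 < eps \<and> eps < min eps0 eps1 \<longrightarrow>
           (\<exists>v. C0 v \<and> (AE x in lborel. u eps x = v x) \<and>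
                ((\<forall>x. v x > 0) \<or> (\<forall>x. v x = 0)))"
proof -
  obtain \<eta> where \<eta>: "\<eta> > 0" and a_neg: "eventually (\<lambda>x. a x \<le> - \<eta>) at_infinity"
    using Limsup_neg_imp_eventually_le[OF a_limsup] by blast
  have "\<exists>v. C0 v \<and> (AE x in lborel. u eps x = v x) \<and> ((\<forall>x. v x > 0) \<or> (\<forall>x. v x = 0))"
    if eps: "0 < eps" "eps < eps0" for eps
  proof -
    interpret symmetric_prob_kernel "kernel_scale eps J"
      using symmetric_prob_kernel_kernel_scale[OF J_int J_nonneg J_radial J_mass eps(1)] .
    obtain C where "u eps \<in> borel_measurable lborel" "AE x in lborel. \<bar>u eps x\<bar> \<le> C"
      using u_Linf[OF eps] unfolding Linf_def by blast
    moreover have "1 / eps powr m > 0"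
      using eps by simp
    ultimately show ?thesis
      using steady_state_C0[OF _ \<eta> a_cont a_neg _ _ u_nonneg[OF eps] u_eq[OF eps]] by blast
  qed
  with eps0_pos show ?thesis
    by (intro exI[of _ eps0]) auto
qed


end
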